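(* Let $W\in\{\mathrm{A}_{\frac12\infty},\mathrm{D}_{\frac12\infty}\}$ and let $f_W:\mathbb{C}^2\to\mathbb{C}$ be the entire function defined below. Then the set of critical values of $f_W$ is $\{0,1\}$; that is, the set $C_W$ of critical points of $f_W$ is contained in $f_W^{-1}(0)\cup f_W^{-1}(1)$, and both values are attained at critical points.
   Context: Let $s(x)=\frac{\sin\sqrt{x}}{\sqrt{x}}=\prod_{n\ge1}\big(1-\frac{x}{n^2\pi^2}\big)$ and $c(x)=\cos\sqrt{x}=\prod_{n\ge1}\big(1-\frac{4x}{(2n-1)^2\pi^2}\big)$, entire functions of $x\in\mathbb{C}$ (real on $\mathbb{R}$), satisfying $xs(x)^2+c(x)^2=1$. Define $f_{\mathrm{A}_{\frac12\infty}}(x,y)=xs(x)^2-y^2=1-c(x)^2-y^2$ and $f_{\mathrm{D}_{\frac12\infty}}(x,y)=xs(x)^2-xy^2=1-c(x)^2-xy^2$ on $\mathbb{C}^2$. *)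

theory Defs
  imports "HOL-Analysis.Analysis"
begin

text \<open>s(x) = sin(sqrt x)/sqrt x (removable singularity at 0 filled by 1), c(x) = cos(sqrt x).
  Both are independent of the branch of the square root.\<close>
definition s_fun :: "complex \<Rightarrow> complex" where
  "s_fun x = (if x = 0 then 1 else sin (csqrt x) / csqrt x)"

definition c_fun :: "complex \<Rightarrow> complex" where
  "c_fun x = cos (csqrt x)"

definition f_A :: "complex \<times> complex \<Rightarrow> complex" where
  "f_A p = fst p * (s_fun (fst p))^2 - (snd p)^2"

definition f_D :: "complex \<times> complex \<Rightarrow> complex" where
  "f_D p = fst p * (s_fun (fst p))^2 - fst p * (snd p)^2"

definition critical_points :: "(complex \<times> complex \<Rightarrow> complex) \<Rightarrow> (complex \<times> complex) set" where
  "critical_points f = {p. (f has_derivative (\<lambda>h. 0)) (at p)}"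

definition critical_values :: "(complex \<times> complex \<Rightarrow> complex) \<Rightarrow> complex set" where
  "critical_values f = f ` critical_points f"

end

theory Submission
  imports Defs
begin

text \<open>Write \<open>'\<close> for \<open>d/dx\<close>. Since \<open>cos w\<close> and \<open>sin w / w\<close> are power series in \<open>w\<^sup>2\<close>, both \<open>s\<close>
  and \<open>c\<close> are entire with \<open>c' = -s/2\<close>, and \<open>sin\<^sup>2 + cos\<^sup>2 = 1\<close> becomes \<open>x s(x)\<^sup>2 = 1 - c(x)\<^sup>2\<close>.
  Hence \<open>f_A = 1 - c(x)\<^sup>2 - y\<^sup>2\<close> has gradient \<open>(c s, -2y)\<close> and \<open>f_D = 1 - c(x)\<^sup>2 - x y\<^sup>2\<close> has
  gradient \<open>(c s - y\<^sup>2, -2xy)\<close>. At a critical point either \<open>x = 0\<close> (only for \<open>f_D\<close>, value \<open>0\<close>)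
  or \<open>y = 0\<close> and \<open>c(x) s(x) = 0\<close>, where the value \<open>1 - c(x)\<^sup>2 = x s(x)\<^sup>2\<close> is \<open>1\<close> or \<open>0\<close>;
  both occur, at \<open>x = (\<pi>/2)\<^sup>2\<close> and \<open>x = \<pi>\<^sup>2\<close>.\<close>

definition cos_sqrt_coeff :: "nat \<Rightarrow> complex" where
  "cos_sqrt_coeff n = of_real (cos_coeff (2 * n))"

definition sinc_sqrt_coeff :: "nat \<Rightarrow> complex" where
  "sinc_sqrt_coeff n = of_real (sin_coeff (2 * n + 1))"

lemma cos_sums_even_part: "(\<lambda>n. cos_sqrt_coeff n * (w\<^sup>2) ^ n) sums cos w"
proof -
  have "strict_mono (\<lambda>n::nat. 2 * n)"
    by (simp add: strict_mono_def)
  moreover have "cos_coeff n *\<^sub>R w ^ n = 0" if "n \<notin> range (\<lambda>n. 2 * n)" for n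
    using that by (auto simp: cos_coeff_def elim!: evenE)
  ultimately have "(\<lambda>n. cos_coeff (2 * n) *\<^sub>R w ^ (2 * n)) sums cos w"
    using sums_mono_reindex[of "\<lambda>n. 2 * n" "\<lambda>n. cos_coeff n *\<^sub>R w ^ n"] cos_converges[of w]
    by auto
  then show ?thesis
    by (simp add: cos_sqrt_coeff_def scaleR_conv_of_real power_mult)
qed

lemma sin_sums_odd_part: "(\<lambda>n. w * (sinc_sqrt_coeff n * (w\<^sup>2) ^ n)) sums sin w"
proof -
  have "strict_mono (\<lambda>n::nat. 2 * n + 1)"
    by (simp add: strict_mono_def)
  moreover have "sin_coeff n *\<^sub>R w ^ n = 0" if "n \<notin> range (\<lambda>n. 2 * n + 1)" for n
    using that by (auto simp: sin_coeff_def elim!: oddE)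
  ultimately have "(\<lambda>n. sin_coeff (2 * n + 1) *\<^sub>R w ^ (2 * n + 1)) sums sin w"
    using sums_mono_reindex[of "\<lambda>n. 2 * n + 1" "\<lambda>n. sin_coeff n *\<^sub>R w ^ n"] sin_converges[of w]
    by auto
  moreover have "sin_coeff (2 * n + 1) *\<^sub>R w ^ (2 * n + 1) = w * (sinc_sqrt_coeff n * (w\<^sup>2) ^ n)" for n
    by (simp add: sinc_sqrt_coeff_def scaleR_conv_of_real power_mult)
  ultimately show ?thesis
    by simp
qed

lemma c_fun_sums: "(\<lambda>n. cos_sqrt_coeff n * x ^ n) sums c_fun x"
  using cos_sums_even_part[of "csqrt x"] by (simp add: c_fun_def)

lemma s_fun_sums: "(\<lambda>n. sinc_sqrt_coeff n * x ^ n) sums s_fun x"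
proof (cases "x = 0")
  case True
  then show ?thesis
    using powser_sums_zero[of sinc_sqrt_coeff]
    by (simp add: s_fun_def sinc_sqrt_coeff_def sin_coeff_def)
next
  case False
  then have "csqrt x \<noteq> 0"
    by simp
  then show ?thesis
    using sums_divide[OF sin_sums_odd_part[of "csqrt x"], of "csqrt x"] False
    by (simp add: s_fun_def)
qed

lemma diffs_cos_sqrt_coeff: "diffs cos_sqrt_coeff n = - sinc_sqrt_coeff n / 2"
proof -
  have "real (Suc n) * cos_coeff (2 * Suc n) = - sin_coeff (2 * n + 1) / 2"
    using cos_coeff_Suc[of "2 * n + 1"] by (simp add: field_simps)
  then have "of_real (real (Suc n) * cos_coeff (2 * Suc n)) = (of_real (- sin_coeff (2 * n + 1) / 2) :: complex)"
    by (rule arg_cong)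
  then show ?thesis
    by (simp add: diffs_def cos_sqrt_coeff_def sinc_sqrt_coeff_def)
qed

lemma c_fun_has_field_derivative: "(c_fun has_field_derivative - s_fun x / 2) (at x)"
proof -
  have c_fun_eq: "c_fun = (\<lambda>x. \<Sum>n. cos_sqrt_coeff n * x ^ n)"
    using c_fun_sums by (auto intro!: sums_unique)
  have "(\<lambda>n. diffs cos_sqrt_coeff n * x ^ n) sums (- s_fun x / 2)"
    using sums_divide[OF sums_minus[OF s_fun_sums[of x]], of 2]
    by (simp add: diffs_cos_sqrt_coeff)
  then have derivative_eq: "(\<Sum>n. diffs cos_sqrt_coeff n * x ^ n) = - s_fun x / 2"
    by (rule sums_unique[symmetric])
  show ?thesis
    using termdiffs_strong_converges_everywhere[OF sums_summable[OF c_fun_sums], of x]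
    unfolding c_fun_eq derivative_eq .
qed

lemma x_s_fun_sq: "x * s_fun x ^ 2 = 1 - c_fun x ^ 2"
proof (cases "x = 0")
  case True
  then show ?thesis
    by (simp add: s_fun_def c_fun_def)
next
  case False
  then have "x * s_fun x ^ 2 = sin (csqrt x) ^ 2"
    by (simp add: s_fun_def power_divide)
  then show ?thesis
    by (simp add: c_fun_def sin_squared_eq)
qed

lemma x_s_fun_sq_in_01:
  assumes "c_fun x * s_fun x = 0"
  shows "x * s_fun x ^ 2 \<in> {0, 1}"
  using assms x_s_fun_sq[of x] by auto

lemma c_fun_pi_half_sq: "c_fun (of_real ((pi / 2)\<^sup>2)) = 0"
  by (simp add: c_fun_def cos_of_real del: of_real_power)

lemma s_fun_pi_sq: "s_fun (of_real (pi\<^sup>2)) = 0"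
  by (simp add: s_fun_def sin_of_real del: of_real_power)

lemma x_s_fun_sq_image:
  "(\<lambda>x. x * s_fun x ^ 2) ` {x. c_fun x * s_fun x = 0} = {0, 1}"
proof
  show "(\<lambda>x. x * s_fun x ^ 2) ` {x. c_fun x * s_fun x = 0} \<subseteq> {0, 1}"
    using x_s_fun_sq_in_01 by blast
next
  let ?a = "of_real ((pi / 2)\<^sup>2) :: complex" and ?b = "of_real (pi\<^sup>2) :: complex"
  have "1 = ?a * s_fun ?a ^ 2"
    using x_s_fun_sq[of ?a] c_fun_pi_half_sq by (simp del: of_real_power)
  moreover have "?a \<in> {x. c_fun x * s_fun x = 0}"
    using c_fun_pi_half_sq by (simp del: of_real_power)
  ultimately have "1 \<in> (\<lambda>x. x * s_fun x ^ 2) ` {x. c_fun x * s_fun x = 0}"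
    by (rule image_eqI)
  moreover have "0 = ?b * s_fun ?b ^ 2"
    using s_fun_pi_sq by (simp del: of_real_power)
  moreover have "?b \<in> {x. c_fun x * s_fun x = 0}"
    using s_fun_pi_sq by (simp del: of_real_power)
  ultimately show "{0, 1} \<subseteq> (\<lambda>x. x * s_fun x ^ 2) ` {x. c_fun x * s_fun x = 0}"
    by (auto intro: image_eqI)
qed

lemma critical_points_iff_derivative_zero:
  assumes "(f has_derivative D) (at p)"
  shows "p \<in> critical_points f \<longleftrightarrow> (\<forall>h. D h = 0)"
proof
  assume "p \<in> critical_points f"
  then have "D = (\<lambda>h. 0)"
    using has_derivative_unique[OF assms] by (simp add: critical_points_def)
  then show "\<forall>h. D h = 0"
    by simp
next
  assume "\<forall>h. D h = 0"
  then have "D = (\<lambda>h. 0)"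
    by auto
  then show "p \<in> critical_points f"
    using assms by (simp add: critical_points_def)
qed

lemma c_fun_fst_has_derivative:
  "((\<lambda>p. c_fun (fst p)) has_derivative (\<lambda>h. - s_fun (fst p) / 2 * fst h)) (at p)"
  using has_derivative_compose[OF has_derivative_fst[OF has_derivative_ident]
      c_fun_has_field_derivative[unfolded has_field_derivative_def], of p UNIV]
  by (simp add: mult.commute)

lemma f_A_has_derivative:
  "(f_A has_derivative (\<lambda>h. c_fun (fst p) * s_fun (fst p) * fst h - 2 * snd p * snd h)) (at p)"
proof -
  have f_A_eq: "f_A = (\<lambda>p. 1 - c_fun (fst p) ^ 2 - snd p ^ 2)"
    by (simp add: fun_eq_iff f_A_def x_s_fun_sq)
  show ?thesis
    unfolding f_A_eq
    by (auto intro!: derivative_eq_intros c_fun_fst_has_derivative simp: algebra_simps)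
qed

lemma f_D_has_derivative:
  "(f_D has_derivative (\<lambda>h. (c_fun (fst p) * s_fun (fst p) - (snd p)\<^sup>2) * fst h
      - 2 * fst p * snd p * snd h)) (at p)"
proof -
  have f_D_eq: "f_D = (\<lambda>p. 1 - c_fun (fst p) ^ 2 - fst p * snd p ^ 2)"
    by (simp add: fun_eq_iff f_D_def x_s_fun_sq)
  show ?thesis
    unfolding f_D_eq
    by (auto intro!: derivative_eq_intros c_fun_fst_has_derivative
        simp: algebra_simps power2_eq_square)
qed

lemma critical_points_f_A:
  "critical_points f_A = (\<lambda>x. (x, 0)) ` {x. c_fun x * s_fun x = 0}"
proof -
  have "(x, y) \<in> critical_points f_A \<longleftrightarrow> c_fun x * s_fun x = 0 \<and> y = 0" for x y
  proof -
    have "(\<forall>h. c_fun x * s_fun x * fst h - 2 * y * snd h = 0) \<longleftrightarrow> c_fun x * s_fun x = 0 \<and> y = 0"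
    proof
      assume "\<forall>h. c_fun x * s_fun x * fst h - 2 * y * snd h = 0"
      from spec[OF this, of "(1, 0)"] spec[OF this, of "(0, 1)"]
      show "c_fun x * s_fun x = 0 \<and> y = 0"
        by simp
    qed simp
    then show ?thesis
      using critical_points_iff_derivative_zero[OF f_A_has_derivative, of "(x, y)"] by simp
  qed
  then show ?thesis
    by auto
qed

lemma critical_points_f_D:
  "critical_points f_D = (\<lambda>x. (x, 0)) ` {x. c_fun x * s_fun x = 0} \<union> {(0, 1), (0, -1)}"
proof -
  have "(x, y) \<in> critical_points f_D \<longleftrightarrow> c_fun x * s_fun x = y\<^sup>2 \<and> x * y = 0" for x y
  proof -
    have "(\<forall>h. (c_fun x * s_fun x - y\<^sup>2) * fst h - 2 * x * y * snd h = 0)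
        \<longleftrightarrow> c_fun x * s_fun x = y\<^sup>2 \<and> x * y = 0"
    proof
      assume "\<forall>h. (c_fun x * s_fun x - y\<^sup>2) * fst h - 2 * x * y * snd h = 0"
      from spec[OF this, of "(1, 0)"] spec[OF this, of "(0, 1)"]
      show "c_fun x * s_fun x = y\<^sup>2 \<and> x * y = 0"
        by simp
    qed simp
    then show ?thesis
      using critical_points_iff_derivative_zero[OF f_D_has_derivative, of "(x, y)"] by simp
  qed
  moreover have "c_fun 0 * s_fun 0 = 1"
    by (simp add: c_fun_def s_fun_def)
  ultimately show ?thesis
    by (auto simp: power2_eq_1_iff)
qed

theorem theorem1:
  shows "critical_values f_A = {0, 1} \<and> critical_values f_D = {0, 1}"
proof
  have "critical_values f_A = (\<lambda>x. x * s_fun x ^ 2) ` {x. c_fun x * s_fun x = 0}"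
    by (simp add: critical_values_def critical_points_f_A image_image f_A_def)
  also have "\<dots> = {0, 1}"
    by (rule x_s_fun_sq_image)
  finally show "critical_values f_A = {0, 1}" .
next
  have "critical_values f_D = insert 0 ((\<lambda>x. x * s_fun x ^ 2) ` {x. c_fun x * s_fun x = 0})"
    by (simp add: critical_values_def critical_points_f_D image_image f_D_def)
  also have "\<dots> = {0, 1}"
    unfolding x_s_fun_sq_image by simp
  finally show "critical_values f_D = {0, 1}" .
qed

end
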